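(* Let $k$ be a field, $V$ a $k$-vector space, and $\varphi\in\operatorname{End}_k(V)$ a finite potent endomorphism with core-nilpotent decomposition $\varphi=\varphi_1+\varphi_2$. Then the Drazin inverse $\varphi^D$ of $\varphi$ is a G-Drazin inverse of $\varphi_1$.
   Context: An endomorphism $\varphi$ of a $k$-vector space $V$ is finite potent if $\varphi^n(V)$ is finite dimensional for some $n$. For such $\varphi$, the AST-decomposition is $V=U_\varphi\oplus W_\varphi$ where $U_\varphi=\{v\in V: \varphi^m(v)=0 \text{ for some } m\}$ and $W_\varphi=\{v\in V: p(\varphi)(v)=0 \text{ for some } p(x)\in k[x] \text{ coprime to } x\}$; $\varphi|_{U_\varphi}$ is nilpotent, $W_\varphi$ is finite dimensional and $\varphi|_{W_\varphi}$ is an automorphism. The index $i(\theta)$ of a finite potent $\theta$ is the nilpotency order of $\theta|_{U_\theta}$. The Drazin inverse $\varphi^D$ equals $(\varphi|_{W_\varphi})^{-1}$ on $W_\varphi$ and $0$ on $U_\varphi$. The core-nilpotent decomposition is $\varphi=\varphi_1+\varphi_2$ with $\varphi_1=\varphi\circ\varphi^D\circ\varphi$ and $\varphi_2=\varphi-\varphi_1$. An endomorphism $\psi$ is a G-Drazin inverse of a finite potent $\theta$ with $s=i(\theta)$ if $\theta\circ\psi\circ\theta=\theta$ and $\psi\circ\theta^{s}=\theta^{s}\circ\psi$. *)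

theory Defs
  imports "HOL-Computational_Algebra.Polynomial"
begin

text \<open>A k-vector space V is modelled by a type 'v with a scalar multiplication
  scale :: 'k \<Rightarrow> 'v \<Rightarrow> 'v satisfying the locale vector_space; endomorphisms are
  the k-linear maps 'v \<Rightarrow> 'v.\<close>

definition endo :: "('k::field \<Rightarrow> 'v::ab_group_add \<Rightarrow> 'v) \<Rightarrow> ('v \<Rightarrow> 'v) \<Rightarrow> bool" where
  "endo scale f \<longleftrightarrow> Vector_Spaces.linear scale scale f"

definition fin_dim_set :: "('k::field \<Rightarrow> 'v::ab_group_add \<Rightarrow> 'v) \<Rightarrow> 'v set \<Rightarrow> bool" where
  "fin_dim_set scale S \<longleftrightarrow> (\<exists>B. finite B \<and> S \<subseteq> module.span scale B)"

definition finite_potent :: "('k::field \<Rightarrow> 'v::ab_group_add \<Rightarrow> 'v) \<Rightarrow> ('v \<Rightarrow> 'v) \<Rightarrow> bool" where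
  "finite_potent scale f \<longleftrightarrow> endo scale f \<and> (\<exists>n. fin_dim_set scale (range (f ^^ n)))"

definition poly_endo :: "('k::field \<Rightarrow> 'v::ab_group_add \<Rightarrow> 'v) \<Rightarrow> 'k poly \<Rightarrow> ('v \<Rightarrow> 'v) \<Rightarrow> 'v \<Rightarrow> 'v" where
  "poly_endo scale p f v = (\<Sum>i\<le>degree p. scale (coeff p i) ((f ^^ i) v))"

definition U_part :: "('v::ab_group_add \<Rightarrow> 'v) \<Rightarrow> 'v set" where
  "U_part f = {v. \<exists>m. (f ^^ m) v = 0}"

definition W_part :: "('k::field \<Rightarrow> 'v::ab_group_add \<Rightarrow> 'v) \<Rightarrow> ('v \<Rightarrow> 'v) \<Rightarrow> 'v set" where
  "W_part scale f = {v. \<exists>p::'k poly. coprime p [:0, 1:] \<and> poly_endo scale p f v = 0}"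

definition index :: "('v::ab_group_add \<Rightarrow> 'v) \<Rightarrow> nat" where
  "index f = (LEAST s. \<forall>v\<in>U_part f. (f ^^ s) v = 0)"

text \<open>Drazin inverse: for v = u + w (u \<in> U_f, w \<in> W_f), f^D v is the unique
  element of W_f mapped by f to w (i.e. (f|W_f)^{-1} w), and f^D vanishes on U_f.\<close>
definition drazin :: "('k::field \<Rightarrow> 'v::ab_group_add \<Rightarrow> 'v) \<Rightarrow> ('v \<Rightarrow> 'v) \<Rightarrow> 'v \<Rightarrow> 'v" where
  "drazin scale f v = (THE y. y \<in> W_part scale f \<and>
      (\<exists>u\<in>U_part f. \<exists>w\<in>W_part scale f. v = u + w \<and> f y = w))"

definition core_part :: "('k::field \<Rightarrow> 'v::ab_group_add \<Rightarrow> 'v) \<Rightarrow> ('v \<Rightarrow> 'v) \<Rightarrow> 'v \<Rightarrow> 'v" where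
  "core_part scale f = f \<circ> drazin scale f \<circ> f"

definition nilpotent_part :: "('k::field \<Rightarrow> 'v::ab_group_add \<Rightarrow> 'v) \<Rightarrow> ('v \<Rightarrow> 'v) \<Rightarrow> 'v \<Rightarrow> 'v" where
  "nilpotent_part scale f = (\<lambda>v. f v - core_part scale f v)"

definition G_drazin_inverse :: "('k::field \<Rightarrow> 'v::ab_group_add \<Rightarrow> 'v) \<Rightarrow> ('v \<Rightarrow> 'v) \<Rightarrow> ('v \<Rightarrow> 'v) \<Rightarrow> bool" where
  "G_drazin_inverse scale \<theta> \<psi> \<longleftrightarrow> finite_potent scale \<theta> \<and> endo scale \<psi> \<and>
     \<theta> \<circ> \<psi> \<circ> \<theta> = \<theta> \<and> \<psi> \<circ> (\<theta> ^^ index \<theta>) = (\<theta> ^^ index \<theta>) \<circ> \<psi>"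

end

theory Submission
  imports Defs "HOL-Computational_Algebra.Polynomial_Factorial"
begin

(* The iterates of f^n v lie in a finite dimensional space, so v is annihilated by X^m P(f)
   with P coprime to X.  A Bezout identity a P + b X^m = 1 splits v into a(f) P(f) v in U_f and
   b(f) f^m v in W_f, and the same identity shows U_f \<inter> W_f = 0 and W_f \<subseteq> f^m(V) for
   every m.  Hence f is bijective on W_f, and f^D is the linear map characterised by
   f^D v \<in> W_f and v - f (f^D v) \<in> U_f; it commutes with f.  The core part f_1 = f f^D f
   takes values in the finite dimensional W_f, on which f^D inverts f: this gives
   f_1 f^D f_1 = f_1 and f^D f_1 = f_1 f^D, so f^D commutes with every power of f_1. *)

lemma coprime_X_iff_poly_0:
  fixes p :: "'k::field poly"
  shows "coprime p [:0, 1:] \<longleftrightarrow> poly p 0 \<noteq> 0"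
proof
  assume "coprime p [:0, 1:]"
  from coprime_poly_0[OF this, of 0] show "poly p 0 \<noteq> 0" by simp
next
  assume p0: "poly p 0 \<noteq> 0"
  have prime: "prime_elem [:0, 1::'k:]" by (rule prime_elem_linear_field_poly) simp
  show "coprime p [:0, 1:]"
  proof (rule coprimeI)
    fix d assume "d dvd p" and "d dvd [:0, 1:]"
    show "is_unit d"
    proof (rule ccontr)
      assume "\<not> is_unit d"
      with prime \<open>d dvd [:0, 1:]\<close> have "[:0, 1:] dvd d" by (rule prime_elemD2)
      then have "[:0, 1:] dvd p" using \<open>d dvd p\<close> by (rule dvd_trans)
      with p0 show False by (simp add: dvd_iff_poly_eq_0)
    qed
  qed
qed

lemma coprime_X_bezout:
  fixes p :: "'k::field poly"
  assumes "coprime p [:0, 1:]"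
  obtains a b where "a * p + b * [:0, 1:] ^ m = 1"
proof -
  obtain c r where p: "p = pCons c r" by (cases p)
  with assms have c: "c \<noteq> 0" by (simp add: coprime_X_iff_poly_0)
  define s where "s = - smult (inverse c) r"
  define y where "y = s * [:0, 1:]"
  have "1 - y ^ m = (1 - y) * (\<Sum>i<m. y ^ i)" by (rule one_diff_power_eq)
  moreover have "1 - y = smult (inverse c) p" using c by (simp add: p y_def s_def algebra_simps)
  moreover have "y ^ m = s ^ m * [:0, 1:] ^ m" by (simp only: y_def power_mult_distrib)
  ultimately have "smult (inverse c) (\<Sum>i<m. y ^ i) * p + s ^ m * [:0, 1:] ^ m = 1"
    by (simp add: algebra_simps)
  then show ?thesis by (rule that)
qed

lemma funpow_comp_commute:
  assumes "g \<circ> h = h \<circ> g"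
  shows "g \<circ> h ^^ n = h ^^ n \<circ> g"
proof (induction n)
  case (Suc n)
  then show ?case by (metis assms comp_assoc funpow.simps(2))
qed simp

context vector_space
begin

lemma in_span_image_lessThan:
  "x \<in> span (g ` {..<k::nat}) \<Longrightarrow> \<exists>c. x = (\<Sum>i<k. scale (c i) (g i))"
proof (induction k arbitrary: x)
  case (Suc k)
  then obtain a where "x - scale a (g k) \<in> span (g ` {..<k})"
    by (auto simp: lessThan_Suc span_insert)
  with Suc.IH obtain c where "x - scale a (g k) = (\<Sum>i<k. scale (c i) (g i))" by blast
  then have "x = (\<Sum>i<Suc k. scale ((c(k := a)) i) (g i))" by (simp add: algebra_simps)
  then show ?case by blast
qed simp

lemma sequence_in_finite_span_dependent:
  assumes "finite B" and "\<And>i. g i \<in> span B"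
  shows "\<exists>k c. g k = (\<Sum>i<k::nat. scale (c i) (g i))"
proof (rule ccontr)
  assume no_recurrence: "\<not> ?thesis"
  have new: "g k \<notin> span (g ` {..<k})" for k
  proof
    assume "g k \<in> span (g ` {..<k})"
    from in_span_image_lessThan[OF this] obtain c where "g k = (\<Sum>i<k. scale (c i) (g i))" ..
    with no_recurrence show False by blast
  qed
  have indep: "independent (g ` {..<k}) \<and> inj_on g {..<k}" for k
  proof (induction k)
    case (Suc k)
    have "g k \<notin> g ` {..<k}" using new[of k] span_superset[of "g ` {..<k}"] by blast
    moreover have "independent (insert (g k) (g ` {..<k}))"
      using Suc.IH new[of k] by (simp add: independent_insert)
    ultimately show ?case using Suc.IH by (simp add: lessThan_Suc)
  qed (simp add: independent_empty)
  have "card (g ` {..<Suc (card B)}) \<le> card B"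
    using independent_span_bound[OF assms(1)] indep assms(2) by auto
  moreover have "card (g ` {..<Suc (card B)}) = Suc (card B)"
    using indep by (simp add: card_image)
  ultimately show False by simp
qed

end

locale linear_endo = vector_space scale
  for scale :: "'k::field \<Rightarrow> 'v::ab_group_add \<Rightarrow> 'v" +
  fixes f :: "'v \<Rightarrow> 'v"
  assumes linear_f: "Vector_Spaces.linear scale scale f"
begin

sublocale f: Vector_Spaces.linear scale scale f
  by (fact linear_f)

lemma poly_endo_pCons: "poly_endo scale (pCons a p) f v = scale a v + poly_endo scale p f (f v)"
proof -
  have "poly_endo scale (pCons a p) f v
      = (\<Sum>i\<le>Suc (degree p). scale (coeff (pCons a p) i) ((f ^^ i) v))"
    unfolding poly_endo_def
    by (rule sum.mono_neutral_left) (auto simp: coeff_eq_0 degree_pCons_le le_Suc_eq)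
  also have "\<dots> = scale a v + (\<Sum>i\<le>degree p. scale (coeff p i) ((f ^^ i) (f v)))"
    by (subst sum.atMost_Suc_shift) (simp add: funpow_Suc_right del: funpow.simps)
  finally show ?thesis
    by (simp add: poly_endo_def)
qed

lemma poly_endo_0 [simp]: "poly_endo scale 0 f v = 0"
  by (simp add: poly_endo_def)

lemma poly_endo_1 [simp]: "poly_endo scale 1 f v = v"
  by (simp add: poly_endo_def)

lemma poly_endo_vec_0 [simp]: "poly_endo scale p f 0 = 0"
  by (induction p) (simp_all add: poly_endo_pCons f.zero)

lemma poly_endo_vec_add:
  "poly_endo scale p f (x + y) = poly_endo scale p f x + poly_endo scale p f y"
  by (induction p arbitrary: x y)
    (simp_all add: poly_endo_pCons f.add scale_right_distrib algebra_simps)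

lemma poly_endo_vec_scale: "poly_endo scale p f (scale c x) = scale c (poly_endo scale p f x)"
  by (induction p arbitrary: x)
    (simp_all add: poly_endo_pCons f.scale scale_right_distrib mult.commute)

lemma poly_endo_f_commute: "poly_endo scale p f (f v) = f (poly_endo scale p f v)"
  by (induction p arbitrary: v) (simp_all add: poly_endo_pCons f.add f.scale)

lemma poly_endo_add: "poly_endo scale (p + q) f v = poly_endo scale p f v + poly_endo scale q f v"
proof (induction p arbitrary: q v)
  case (pCons a p)
  then show ?case
    by (cases q) (simp add: poly_endo_pCons scale_left_distrib algebra_simps)
qed simp

lemma poly_endo_diff: "poly_endo scale (p - q) f v = poly_endo scale p f v - poly_endo scale q f v"
  using poly_endo_add[of "p - q" q v] by (simp add: algebra_simps)

lemma poly_endo_sum: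
  "poly_endo scale (\<Sum>i<k::nat. g i) f v = (\<Sum>i<k. poly_endo scale (g i) f v)"
  by (induction k) (simp_all add: poly_endo_add)

lemma poly_endo_smult: "poly_endo scale (smult c p) f v = scale c (poly_endo scale p f v)"
  by (induction p arbitrary: v) (simp_all add: poly_endo_pCons scale_right_distrib)

lemma poly_endo_mult:
  "poly_endo scale (p * q) f v = poly_endo scale p f (poly_endo scale q f v)"
proof (induction p arbitrary: v)
  case (pCons a p)
  have "poly_endo scale (pCons a p * q) f v = poly_endo scale (smult a q + pCons 0 (p * q)) f v"
    by simp
  also have "\<dots> = scale a (poly_endo scale q f v)
      + poly_endo scale p f (poly_endo scale q f (f v))"
    by (simp add: poly_endo_add poly_endo_smult poly_endo_pCons pCons.IH)
  also have "\<dots> = poly_endo scale (pCons a p) f (poly_endo scale q f v)"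
    by (simp add: poly_endo_pCons poly_endo_f_commute)
  finally show ?case .
qed simp

lemma poly_endo_commute:
  "poly_endo scale p f (poly_endo scale q f v) = poly_endo scale q f (poly_endo scale p f v)"
  by (metis poly_endo_mult mult.commute)

lemma poly_endo_X_power: "poly_endo scale ([:0, 1:] ^ k) f v = (f ^^ k) v"
  by (induction k arbitrary: v) (simp_all add: poly_endo_mult poly_endo_pCons funpow_swap1)

lemma poly_endo_monom: "poly_endo scale (monom c k) f v = scale c ((f ^^ k) v)"
  by (simp add: monom_altdef poly_endo_smult poly_endo_X_power)

lemma annihilating_poly_exists:
  assumes "finite B" and "\<And>i. (f ^^ i) w \<in> span B"
  obtains q where "q \<noteq> 0" and "poly_endo scale q f w = 0"
proof -
  obtain k c where recurrence: "(f ^^ k) w = (\<Sum>i<k. scale (c i) ((f ^^ i) w))"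
    using sequence_in_finite_span_dependent[of B "\<lambda>i. (f ^^ i) w", OF assms] by blast
  define q where "q = monom 1 k - (\<Sum>i<k. monom (c i) i)"
  have "poly_endo scale q f w = 0"
    using recurrence by (simp add: q_def poly_endo_diff poly_endo_sum poly_endo_monom)
  moreover have "coeff q k = 1"
    by (simp add: q_def coeff_diff coeff_sum coeff_monom)
  ultimately show thesis
    by (intro that) auto
qed

lemma subspace_annihilated:
  assumes "1 \<in> S" and "\<And>p q. p \<in> S \<Longrightarrow> q \<in> S \<Longrightarrow> p * q \<in> S"
  shows "subspace {v. \<exists>p\<in>S. poly_endo scale p f v = 0}" (is "subspace ?A")
proof (rule subspaceI)
  show "0 \<in> ?A"
    using assms(1) by auto
next
  fix x y
  assume "x \<in> ?A" and "y \<in> ?A"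
  then obtain p q where "p \<in> S" "q \<in> S"
    and pq: "poly_endo scale p f x = 0" "poly_endo scale q f y = 0"
    by blast
  have "poly_endo scale (p * q) f (x + y)
      = poly_endo scale q f (poly_endo scale p f x) + poly_endo scale p f (poly_endo scale q f y)"
    by (simp add: poly_endo_mult poly_endo_vec_add poly_endo_commute[of p q x])
  then show "x + y \<in> ?A"
    using pq \<open>p \<in> S\<close> \<open>q \<in> S\<close> assms(2) by auto
next
  fix c x
  assume "x \<in> ?A"
  then show "scale c x \<in> ?A"
    by (auto simp: poly_endo_vec_scale)
qed

lemma subspace_U_part: "subspace (U_part f)"
proof -
  have "U_part f = {v. \<exists>p\<in>range (\<lambda>m. [:0, 1:] ^ m). poly_endo scale p f v = 0}"
    by (auto simp: U_part_def poly_endo_X_power)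
  also have "subspace \<dots>"
  proof (rule subspace_annihilated)
    show "1 \<in> range (\<lambda>m. [:0, 1:] ^ m)"
      by (rule range_eqI[of _ _ 0]) simp
  qed (auto simp flip: power_add)
  finally show ?thesis .
qed

lemma subspace_W_part: "subspace (W_part scale f)"
proof -
  have "W_part scale f = {v. \<exists>p\<in>{p. coprime p [:0, 1:]}. poly_endo scale p f v = 0}"
    by (auto simp: W_part_def)
  also have "subspace \<dots>"
    by (rule subspace_annihilated) (auto simp: coprime_X_iff_poly_0)
  finally show ?thesis .
qed

lemma f_U_part: "u \<in> U_part f \<Longrightarrow> f u \<in> U_part f"
proof -
  assume "u \<in> U_part f"
  then obtain m where "(f ^^ m) u = 0"
    by (auto simp: U_part_def)
  then have "(f ^^ m) (f u) = 0"
    by (simp add: f.zero flip: funpow_swap1)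
  then show ?thesis
    by (auto simp: U_part_def)
qed

lemma poly_endo_W_part: "w \<in> W_part scale f \<Longrightarrow> poly_endo scale q f w \<in> W_part scale f"
  by (auto simp: W_part_def poly_endo_commute[of _ q])

lemma f_W_part: "w \<in> W_part scale f \<Longrightarrow> f w \<in> W_part scale f"
  using poly_endo_W_part[of w "[:0, 1:]"] by (simp add: poly_endo_pCons)

lemma U_part_inter_W_part: "U_part f \<inter> W_part scale f = {0}"
proof -
  have "v = 0" if "v \<in> U_part f" and "v \<in> W_part scale f" for v
  proof -
    from that obtain m P where m: "(f ^^ m) v = 0"
      and P: "coprime P [:0, 1:]" "poly_endo scale P f v = 0"
      by (auto simp: U_part_def W_part_def)
    from P(1) obtain a b where bezout: "a * P + b * [:0, 1:] ^ m = 1"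
      by (rule coprime_X_bezout)
    have "v = poly_endo scale (a * P + b * [:0, 1:] ^ m) f v"
      by (simp add: bezout)
    also have "\<dots> = poly_endo scale a f (poly_endo scale P f v)
        + poly_endo scale b f (poly_endo scale ([:0, 1:] ^ m) f v)"
      by (simp only: poly_endo_add poly_endo_mult)
    also have "\<dots> = 0"
      using m P(2) by (simp add: poly_endo_X_power)
    finally show "v = 0" .
  qed
  then show ?thesis
    using subspace_0[OF subspace_U_part] subspace_0[OF subspace_W_part] by blast
qed

lemma W_part_image_funpow: "w \<in> W_part scale f \<Longrightarrow> \<exists>y\<in>W_part scale f. w = (f ^^ m) y"
proof -
  assume w: "w \<in> W_part scale f"
  then obtain P where P: "coprime P [:0, 1:]" "poly_endo scale P f w = 0"
    by (auto simp: W_part_def)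
  from P(1) obtain a b where "a * P + b * [:0, 1:] ^ m = 1"
    by (rule coprime_X_bezout)
  then have "w = poly_endo scale (a * P + [:0, 1:] ^ m * b) f w"
    by (simp add: mult.commute)
  also have "\<dots> = poly_endo scale a f (poly_endo scale P f w)
      + poly_endo scale ([:0, 1:] ^ m) f (poly_endo scale b f w)"
    by (simp only: poly_endo_add poly_endo_mult)
  also have "\<dots> = (f ^^ m) (poly_endo scale b f w)"
    using P(2) by (simp add: poly_endo_X_power)
  finally show ?thesis
    using poly_endo_W_part[OF w] by blast
qed

lemma inj_on_W_part: "inj_on f (W_part scale f)"
proof (rule inj_onI)
  fix x y
  assume "x \<in> W_part scale f" "y \<in> W_part scale f" "f x = f y"
  then have "x - y \<in> U_part f \<inter> W_part scale f"
    by (auto simp: U_part_def f.diff intro!: exI[of _ 1] subspace_diff[OF subspace_W_part])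
  then show "x = y"
    by (simp add: U_part_inter_W_part)
qed

lemma drazin_eqI:
  assumes "y \<in> W_part scale f" and "v - f y \<in> U_part f"
  shows "drazin scale f v = y"
  unfolding drazin_def
proof (rule the_equality)
  show "y \<in> W_part scale f \<and>
      (\<exists>u\<in>U_part f. \<exists>w\<in>W_part scale f. v = u + w \<and> f y = w)"
    using assms f_W_part by force
next
  fix y'
  assume "y' \<in> W_part scale f \<and>
      (\<exists>u\<in>U_part f. \<exists>w\<in>W_part scale f. v = u + w \<and> f y' = w)"
  then obtain u where y': "y' \<in> W_part scale f" "u \<in> U_part f" "v = u + f y'"
    by blast
  have "f y - f y' = u - (v - f y)"
    using y'(3) by (simp add: algebra_simps)
  also have "\<dots> \<in> U_part f"
    using y'(2) assms(2) by (rule subspace_diff[OF subspace_U_part])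
  finally have "f y - f y' \<in> U_part f" .
  moreover have "f y - f y' \<in> W_part scale f"
    using assms(1) y'(1) by (intro subspace_diff[OF subspace_W_part] f_W_part)
  ultimately have "f y - f y' \<in> U_part f \<inter> W_part scale f"
    by (rule IntI)
  then have "f y' = f y"
    by (simp add: U_part_inter_W_part)
  then show "y' = y"
    using inj_on_W_part assms(1) y'(1) by (auto dest: inj_onD)
qed

lemma drazin_f_W_part: "y \<in> W_part scale f \<Longrightarrow> drazin scale f (f y) = y"
  by (rule drazin_eqI) (simp_all add: subspace_0[OF subspace_U_part])

end

locale finite_potent_endo = linear_endo +
  assumes fin_dim_range_funpow: "\<exists>n. fin_dim_set scale (range (f ^^ n))"
begin

lemma fin_dim_W_part: "fin_dim_set scale (W_part scale f)"
proof -
  obtain n where "fin_dim_set scale (range (f ^^ n))"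
    using fin_dim_range_funpow ..
  moreover have "W_part scale f \<subseteq> range (f ^^ n)"
    using W_part_image_funpow by blast
  ultimately show ?thesis
    unfolding fin_dim_set_def by blast
qed

lemma U_part_W_part_decomposition: "\<exists>u\<in>U_part f. \<exists>w\<in>W_part scale f. v = u + w"
proof -
  obtain n B where B: "finite B" "range (f ^^ n) \<subseteq> span B"
    using fin_dim_range_funpow unfolding fin_dim_set_def by blast
  have "(f ^^ i) ((f ^^ n) v) \<in> span B" for i
  proof -
    have "(f ^^ i) ((f ^^ n) v) = (f ^^ n) ((f ^^ i) v)"
      by (metis add.commute comp_apply funpow_add)
    then show ?thesis
      using B(2) by auto
  qed
  with B(1) obtain q where q: "q \<noteq> 0" "poly_endo scale q f ((f ^^ n) v) = 0"
    by (rule annihilating_poly_exists)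
  obtain P where P: "q = [:0, 1:] ^ order 0 q * P" "\<not> [:0, 1:] dvd P"
    using order_decomp[OF q(1), of 0] by auto
  then have "coprime P [:0, 1:]"
    by (simp add: coprime_X_iff_poly_0 dvd_iff_poly_eq_0)
  let ?m = "order 0 q + n"
  from \<open>coprime P [:0, 1:]\<close> obtain a b where bezout: "a * P + b * [:0, 1:] ^ ?m = 1"
    by (rule coprime_X_bezout)
  have "[:0, 1:] ^ ?m * P = q * [:0, 1:] ^ n"
    by (subst P(1)) (simp add: power_add ac_simps)
  then have annihilated: "poly_endo scale ([:0, 1:] ^ ?m) f (poly_endo scale P f v) = 0"
    using q(2) by (simp flip: poly_endo_mult add: poly_endo_mult[of q] poly_endo_X_power)
  define u where "u = poly_endo scale (a * P) f v"
  define w where "w = poly_endo scale (b * [:0, 1:] ^ ?m) f v"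
  have "v = poly_endo scale (a * P + b * [:0, 1:] ^ ?m) f v"
    by (simp add: bezout)
  then have "v = u + w"
    by (simp only: poly_endo_add u_def w_def)
  moreover have "(f ^^ ?m) u = 0"
    using annihilated by (simp add: u_def poly_endo_mult poly_endo_commute[of "[:0, 1:] ^ ?m" a]
        flip: poly_endo_X_power)
  moreover have "poly_endo scale P f w = 0"
    using annihilated
    by (simp add: w_def poly_endo_mult poly_endo_commute[of P b]
        poly_endo_commute[of P "[:0, 1:] ^ ?m"])
  ultimately show ?thesis
    using \<open>coprime P [:0, 1:]\<close> unfolding U_part_def W_part_def by blast
qed

lemma
  shows drazin_in_W_part: "drazin scale f v \<in> W_part scale f"
    and drazin_residual_in_U_part: "v - f (drazin scale f v) \<in> U_part f"
proof -
  obtain u w where "u \<in> U_part f" "w \<in> W_part scale f" "v = u + w"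
    using U_part_W_part_decomposition by blast
  moreover from \<open>w \<in> W_part scale f\<close> obtain y where "y \<in> W_part scale f" "w = f y"
    using W_part_image_funpow[of w 1] by auto
  ultimately have "drazin scale f v = y"
    by (intro drazin_eqI) simp_all
  then show "drazin scale f v \<in> W_part scale f" and "v - f (drazin scale f v) \<in> U_part f"
    using \<open>y \<in> W_part scale f\<close> \<open>u \<in> U_part f\<close> \<open>v = u + w\<close> \<open>w = f y\<close> by simp_all
qed

lemma linear_drazin: "Vector_Spaces.linear scale scale (drazin scale f)"
proof -
  have "drazin scale f (x + y) = drazin scale f x + drazin scale f y" for x y
  proof (rule drazin_eqI)
    show "drazin scale f x + drazin scale f y \<in> W_part scale f"
      by (intro subspace_add[OF subspace_W_part] drazin_in_W_part)
    have "x + y - f (drazin scale f x + drazin scale f y)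
        = (x - f (drazin scale f x)) + (y - f (drazin scale f y))"
      by (simp add: f.add algebra_simps)
    also have "\<dots> \<in> U_part f"
      by (intro subspace_add[OF subspace_U_part] drazin_residual_in_U_part)
    finally show "x + y - f (drazin scale f x + drazin scale f y) \<in> U_part f" .
  qed
  moreover have "drazin scale f (scale c x) = scale c (drazin scale f x)" for c x
  proof (rule drazin_eqI)
    show "scale c (drazin scale f x) \<in> W_part scale f"
      by (intro subspace_scale[OF subspace_W_part] drazin_in_W_part)
    have "scale c x - f (scale c (drazin scale f x)) = scale c (x - f (drazin scale f x))"
      by (simp add: f.scale scale_right_diff_distrib)
    also have "\<dots> \<in> U_part f"
      by (intro subspace_scale[OF subspace_U_part] drazin_residual_in_U_part)
    finally show "scale c x - f (scale c (drazin scale f x)) \<in> U_part f" .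
  qed
  ultimately show ?thesis
    by (simp add: Vector_Spaces.linear_iff vector_space_axioms)
qed

lemma drazin_f_commute: "drazin scale f (f v) = f (drazin scale f v)"
proof (rule drazin_eqI)
  show "f (drazin scale f v) \<in> W_part scale f"
    by (intro f_W_part drazin_in_W_part)
  show "f v - f (f (drazin scale f v)) \<in> U_part f"
    using f_U_part[OF drazin_residual_in_U_part] by (simp add: f.diff)
qed

lemma core_part_in_W_part: "core_part scale f v \<in> W_part scale f"
  by (simp add: core_part_def f_W_part drazin_in_W_part)

lemma core_part_drazin_core_part:
  "core_part scale f \<circ> drazin scale f \<circ> core_part scale f = core_part scale f"
  by (simp add: fun_eq_iff core_part_def drazin_f_W_part drazin_in_W_part)

lemma drazin_core_part_commute:
  "drazin scale f \<circ> core_part scale f = core_part scale f \<circ> drazin scale f"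
  by (simp add: fun_eq_iff core_part_def drazin_f_W_part drazin_in_W_part drazin_f_commute)

lemma finite_potent_core_part: "finite_potent scale (core_part scale f)"
proof -
  have "Vector_Spaces.linear scale scale (core_part scale f)"
    unfolding core_part_def
    by (rule Vector_Spaces.linear_compose[OF linear_f
          Vector_Spaces.linear_compose[OF linear_drazin linear_f]])
  moreover have "range (core_part scale f ^^ 1) \<subseteq> W_part scale f"
    using core_part_in_W_part by auto
  ultimately show ?thesis
    using fin_dim_W_part unfolding finite_potent_def endo_def fin_dim_set_def by blast
qed

end

lemma finite_potent_endoI:
  assumes "vector_space scale" and "finite_potent scale f"
  shows "finite_potent_endo scale f"
  using assms unfolding finite_potent_def endo_def
  by (intro finite_potent_endo.intro linear_endo.intro linear_endo_axioms.intro
      finite_potent_endo_axioms.intro) auto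

theorem corollary3p6:
  fixes scale :: "'k::field \<Rightarrow> 'v::ab_group_add \<Rightarrow> 'v"
    and \<phi> :: "'v \<Rightarrow> 'v"
  assumes "vector_space scale"
    and "finite_potent scale \<phi>"
  shows "G_drazin_inverse scale (core_part scale \<phi>) (drazin scale \<phi>)"
proof -
  interpret finite_potent_endo scale \<phi>
    using assms by (rule finite_potent_endoI)
  show ?thesis
    unfolding G_drazin_inverse_def endo_def
    using finite_potent_core_part linear_drazin core_part_drazin_core_part
      funpow_comp_commute[OF drazin_core_part_commute] by blast
qed

end
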